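(* Let $S,T\subseteq[r]$ with $S$ dominating $T$. Then $h_T(L)\le h_S(L)$ for every geometric lattice $L$ of rank at least $r+1$.
   Context: For a permutation $\pi=a_1\cdots a_{r+1}\in S_{r+1}$ ($a_i=\pi(i)$), its descent set is $\{i\in[r]:a_i>a_{i+1}\}$, and $D(S)$ denotes the set of permutations in $S_{r+1}$ with descent set $S$. The inversion set is $I(\pi)=\{(a_i,a_j): i<j,\ a_i>a_j\}$; the weak Bruhat order is $\pi\le_w\pi'$ iff $I(\pi)\subseteq I(\pi')$. $S$ dominates $T$ if there is an injection $\phi:D(T)\to D(S)$ with $\pi\le_w\phi(\pi)$ for all $\pi\in D(T)$. For a geometric lattice $L$ of rank $N+1$ and $S\subseteq[N]$, $f_S(L)$ is the number of chains of $L$ whose elements have ranks exactly the elements of $S$, and $h_S(L)=\sum_{U\subseteq S}(-1)^{|S|-|U|}f_U(L)$; subsets of $[r]$ are regarded as subsets of $[N]$ when $N\ge r$. *)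

theory Defs
  imports "HOL-Combinatorics.Permutations"
begin

definition descent_set :: "nat \<Rightarrow> (nat \<Rightarrow> nat) \<Rightarrow> nat set" where
  "descent_set r p = {i \<in> {1..r}. p i > p (Suc i)}"

definition perms_with_descents :: "nat \<Rightarrow> nat set \<Rightarrow> (nat \<Rightarrow> nat) set" where
  "perms_with_descents r S = {p. p permutes {1..Suc r} \<and> descent_set r p = S}"

definition inversion_set :: "nat \<Rightarrow> (nat \<Rightarrow> nat) \<Rightarrow> (nat \<times> nat) set" where
  "inversion_set r p = {(p i, p j) | i j. 1 \<le> i \<and> i < j \<and> j \<le> Suc r \<and> p i > p j}"

definition weak_le :: "nat \<Rightarrow> (nat \<Rightarrow> nat) \<Rightarrow> (nat \<Rightarrow> nat) \<Rightarrow> bool" where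
  "weak_le r p q \<longleftrightarrow> inversion_set r p \<subseteq> inversion_set r q"

definition dominates :: "nat \<Rightarrow> nat set \<Rightarrow> nat set \<Rightarrow> bool" where
  "dominates r S T \<longleftrightarrow> (\<exists>\<phi>. inj_on \<phi> (perms_with_descents r T)
       \<and> \<phi> ` perms_with_descents r T \<subseteq> perms_with_descents r S
       \<and> (\<forall>\<pi>\<in>perms_with_descents r T. weak_le r \<pi> (\<phi> \<pi>)))"

definition covers :: "'a::order \<Rightarrow> 'a \<Rightarrow> bool" where
  "covers x y \<longleftrightarrow> x < y \<and> \<not> (\<exists>z. x < z \<and> z < y)"

definition is_atom :: "'a::{order,bot} \<Rightarrow> bool" where
  "is_atom a \<longleftrightarrow> covers bot a"

definition geometric_lattice :: "'a::{finite,complete_lattice} itself \<Rightarrow> bool" where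
  "geometric_lattice _ \<longleftrightarrow>
     (\<forall>x::'a. x = Sup {a. is_atom a \<and> a \<le> x}) \<and>
     (\<forall>x y::'a. covers (inf x y) x \<longrightarrow> covers y (sup x y))"

definition lrank :: "'a::{finite,complete_lattice} \<Rightarrow> nat" where
  "lrank x = Max {card C | C. C \<subseteq> {bot..x} \<and> Complete_Partial_Order.chain (\<le>) C} - 1"

definition flag_f :: "'a::{finite,complete_lattice} itself \<Rightarrow> nat set \<Rightarrow> nat" where
  "flag_f _ S = card {C :: 'a set. Complete_Partial_Order.chain (\<le>) C \<and> lrank ` C = S}"

definition flag_h :: "'a::{finite,complete_lattice} itself \<Rightarrow> nat set \<Rightarrow> int" where
  "flag_h L S = (\<Sum>U\<in>Pow S. (-1) ^ (card S - card U) * int (flag_f L U))"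

end

theory Submission
  imports Defs "HOL-Library.Countable"
begin

text \<open>Fix an enumeration of the atoms of \<open>L\<close>. A flag is a saturated chain
  \<open>bot = x\<^sub>0 < x\<^sub>1 < \<dots> < x\<^sub>r\<close>; put \<open>x\<^sub>r\<^sub>+\<^sub>1 = top\<close> and label step \<open>i\<close> by the first atom below
  \<open>x\<^sub>i\<close> but not below \<open>x\<^sub>i\<^sub>-\<^sub>1\<close>. The labels are distinct, so they have a pattern: the permutation
  of \<open>[r+1]\<close> in the same relative order, whose descent set is that of the labels.

  Refining a chain with rank set \<open>U\<close> greedily, always taking the first available atom, gives the
  unique flag refining it whose descents lie in \<open>U\<close>. Hence \<open>f\<^sub>U\<close> counts the flags with descent set
  contained in \<open>U\<close>, and by inclusion--exclusion \<open>h\<^sub>S\<close> counts the flags with descent set \<open>S\<close>.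

  If the pattern has an ascent at \<open>i\<close>, replacing \<open>x\<^sub>i\<close> by \<open>x\<^sub>i\<^sub>-\<^sub>1\<close> joined with the label of step
  \<open>i + 1\<close> gives a flag whose labels are the old ones with positions \<open>i\<close>, \<open>i + 1\<close> exchanged, so its
  pattern moves up by one step in the weak order. Iterating, every \<open>\<sigma>\<close> above the pattern of a flag
  is the pattern of a flag carrying a rearrangement of the same labels. Following the injection
  \<open>D(T) \<rightarrow> D(S)\<close> in this way maps flags with descent set \<open>T\<close> injectively to flags with descent
  set \<open>S\<close>: the two patterns determine the rearrangement, and the labels determine the flag.\<close>

section \<open>Saturated chains in semimodular lattices\<close>

inductive cover_chain :: "'a::order \<Rightarrow> 'a \<Rightarrow> nat \<Rightarrow> bool" where
  cover_chain_refl: "cover_chain a a 0"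
| cover_chain_step: "covers a c \<Longrightarrow> cover_chain c b n \<Longrightarrow> cover_chain a b (Suc n)"

inductive_cases cover_chain_0E: "cover_chain a b 0"
inductive_cases cover_chain_SucE: "cover_chain a b (Suc n)"

lemma cover_chain_le: "cover_chain a b n \<Longrightarrow> a \<le> b"
  by (induction rule: cover_chain.induct) (auto simp: covers_def)

lemma cover_chain_trans: "cover_chain a b m \<Longrightarrow> cover_chain b c n \<Longrightarrow> cover_chain a c (m + n)"
  by (induction rule: cover_chain.induct) (auto intro: cover_chain.intros)

lemma cover_chain_covers: "covers a b \<Longrightarrow> cover_chain a b 1"
  using cover_chain_step[OF _ cover_chain_refl] by simp

lemma cover_chain_Suc_less: "cover_chain a b (Suc n) \<Longrightarrow> a < b"
  by (elim cover_chain_SucE) (auto simp: covers_def dest: cover_chain_le)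

lemma cover_chain_less_imp_pos: "cover_chain a b n \<Longrightarrow> a < b \<Longrightarrow> 0 < n"
  by (cases n) (auto elim: cover_chain_0E)

lemma covers_exists:
  fixes a b :: "'a::{finite,order}"
  assumes "a < b"
  shows "\<exists>c. covers a c \<and> c \<le> b"
proof -
  obtain c where c: "a < c" "c \<le> b" and min: "\<And>z. a < z \<Longrightarrow> z \<le> b \<Longrightarrow> z \<le> c \<Longrightarrow> z = c"
    using finite_has_minimal[of "{z. a < z \<and> z \<le> b}"] assms by auto
  have "covers a c"
    unfolding covers_def using c min by (metis less_le_not_le order.trans)
  with c show ?thesis by blast
qed

lemma cover_chain_exists:
  fixes a b :: "'a::{finite,order}"
  shows "a \<le> b \<Longrightarrow> \<exists>n. cover_chain a b n"
proof (induction a rule: measure_induct_rule[where f = "\<lambda>a. card {z. a < z \<and> z \<le> b}"])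
  case (less a)
  show ?case
  proof (cases "a = b")
    case True
    then show ?thesis by (auto intro: cover_chain_refl)
  next
    case False
    with less.prems obtain c where c: "covers a c" "c \<le> b"
      using covers_exists by (metis order.not_eq_order_implies_strict)
    then have "{z. c < z \<and> z \<le> b} \<subset> {z. a < z \<and> z \<le> b}"
      by (auto simp: covers_def)
    then have "card {z. c < z \<and> z \<le> b} < card {z. a < z \<and> z \<le> b}"
      by (simp add: psubset_card_mono)
    with less.IH c(2) obtain n where "cover_chain c b n" by blast
    with c(1) show ?thesis by (auto intro: cover_chain_step)
  qed
qed

lemma covers_inf_eq:
  fixes a x y :: "'a::lattice"
  assumes "covers a x" "covers a y" "x \<noteq> y"
  shows "inf x y = a"
  using assms unfolding covers_def
  by (metis inf.cobounded1 inf.cobounded2 le_inf_iff order.not_eq_order_implies_strict order_less_imp_le)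

lemma cover_chain_length_unique:
  fixes a b :: "'a::{finite,lattice}"
  assumes semimodular: "\<And>x y::'a. covers (inf x y) x \<Longrightarrow> covers y (sup x y)"
  shows "cover_chain a b m \<Longrightarrow> cover_chain a b n \<Longrightarrow> m = n"
proof (induction m arbitrary: a n rule: less_induct)
  case (less m)
  show ?case
  proof (cases m)
    case 0
    with less.prems show ?thesis
      by (cases n) (auto elim: cover_chain_0E dest: cover_chain_Suc_less)
  next
    case (Suc m')
    with less.prems obtain n' where n: "n = Suc n'"
      by (cases n) (auto elim: cover_chain_0E dest: cover_chain_Suc_less)
    obtain x where x: "covers a x" "cover_chain x b m'"
      using less.prems(1) Suc by (auto elim: cover_chain_SucE)
    obtain y where y: "covers a y" "cover_chain y b n'"
      using less.prems(2) n by (auto elim: cover_chain_SucE)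
    show ?thesis
    proof (cases "x = y")
      case True
      then show ?thesis using less.IH[of m' x n'] x y Suc n by simp
    next
      case False
      have "inf x y = a" using covers_inf_eq[OF x(1) y(1) False] .
      then have "covers x (sup x y)" "covers y (sup x y)"
        using semimodular[of y x] semimodular[of x y] x(1) y(1) by (simp_all add: inf_commute sup_commute)
      moreover obtain k where k: "cover_chain (sup x y) b k"
        using cover_chain_exists cover_chain_le[OF x(2)] cover_chain_le[OF y(2)] by (metis le_sup_iff)
      ultimately have "cover_chain x b (Suc k)" "cover_chain y b (Suc k)"
        by (auto intro: cover_chain_step)
      then show ?thesis using less.IH[of m' x "Suc k"] less.IH[of m' y n'] x(2) y(2) Suc n by simp
    qed
  qed
qed

lemma cover_chain_imp_chain:
  "cover_chain a b n \<Longrightarrow> \<exists>C. C \<subseteq> {a..b} \<and> Complete_Partial_Order.chain (\<le>) C \<and> card C = Suc n"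
proof (induction rule: cover_chain.induct)
  case (cover_chain_refl a)
  then show ?case by (intro exI[of _ "{a}"]) (auto simp: chain_def)
next
  case (cover_chain_step a c b n)
  then obtain C where C: "C \<subseteq> {c..b}" "Complete_Partial_Order.chain (\<le>) C" "card C = Suc n"
    by blast
  have "a < c" using cover_chain_step.hyps(1) by (simp add: covers_def)
  then have above: "\<forall>z\<in>C. a < z" using C(1) by (auto dest!: subsetD intro: less_le_trans)
  moreover have "c \<le> b" using cover_chain_le[OF cover_chain_step.hyps(2)] .
  ultimately have "insert a C \<subseteq> {a..b}" "Complete_Partial_Order.chain (\<le>) (insert a C)"
    using C(1,2) \<open>a < c\<close> by (auto simp: chain_def less_imp_le)
  moreover have "card (insert a C) = Suc (Suc n)"
    using C(3) above by (metis card.infinite card_insert_disjoint less_irrefl nat.distinct(1))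
  ultimately show ?case by blast
qed

lemma finite_chain_has_least:
  fixes C :: "'a::order set"
  assumes "finite C" "C \<noteq> {}" "Complete_Partial_Order.chain (\<le>) C"
  shows "\<exists>c\<in>C. \<forall>z\<in>C. c \<le> z"
  using finite_has_minimal[OF assms(1,2)] assms(3) unfolding chain_def by fastforce

lemma chain_card_le_cover_chain_length:
  fixes a b :: "'a::{finite,lattice}"
  assumes semimodular: "\<And>x y::'a. covers (inf x y) x \<Longrightarrow> covers y (sup x y)"
  shows "cover_chain a b m \<Longrightarrow> Complete_Partial_Order.chain (\<le>) C \<Longrightarrow> C \<subseteq> {a..b} \<Longrightarrow> card C \<le> Suc m"
proof (induction "card C" arbitrary: C a m rule: less_induct)
  case less
  show ?case
  proof (cases "card C \<le> 1")
    case False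
    then have "C \<noteq> {}" by auto
    then obtain c where c: "c \<in> C" "\<forall>z\<in>C. c \<le> z"
      using finite_chain_has_least[OF finite _ less.prems(2)] by blast
    let ?C' = "C - {c}"
    have card: "card C = Suc (card ?C')" using c(1) by (simp add: card_Suc_Diff1 del: card_Diff_insert)
    then have ne: "?C' \<noteq> {}" using False by auto
    have chain': "Complete_Partial_Order.chain (\<le>) ?C'"
      using chain_subset[OF less.prems(2) Diff_subset] .
    obtain d where d: "d \<in> ?C'" "\<forall>z\<in>?C'. d \<le> z"
      using finite_chain_has_least[OF finite ne chain'] by blast
    have "c \<le> d" "c \<noteq> d" using c(2) d(1) by auto
    then have "c < d" by simp
    then obtain e where e: "covers c e" "e \<le> d" using covers_exists by blast
    have "d \<le> b" using d(1) less.prems(3) by auto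
    have sub: "?C' \<subseteq> {e..b}"
    proof
      fix z assume "z \<in> ?C'"
      then show "z \<in> {e..b}" using d(2) e(2) less.prems(3) by (force intro: order.trans[of e d z])
    qed
    obtain j where j: "cover_chain e b j"
      using cover_chain_exists[OF order_trans[OF e(2) \<open>d \<le> b\<close>]] by blast
    have "a \<le> c" using c(1) less.prems(3) by auto
    then obtain p where p: "cover_chain a c p"
      using cover_chain_exists by blast
    have "cover_chain a b (p + Suc j)"
      using cover_chain_trans[OF p cover_chain_step[OF e(1) j]] .
    then have "m = p + Suc j"
      using cover_chain_length_unique[OF semimodular less.prems(1)] by blast
    moreover have "card ?C' \<le> Suc j" using less.hyps[of ?C' e j] card j chain' sub by simp
    ultimately show ?thesis using card by simp
  qed simp
qed

lemma lrank_eq_cover_chain_length: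
  fixes x :: "'a::{finite,complete_lattice}"
  assumes semimodular: "\<And>x y::'a. covers (inf x y) x \<Longrightarrow> covers y (sup x y)"
    and "cover_chain bot x n"
  shows "lrank x = n"
proof -
  let ?M = "{card C |C. C \<subseteq> {bot..x} \<and> Complete_Partial_Order.chain (\<le>) C}"
  have "Max ?M = Suc n"
  proof (rule Max_eqI)
    show "finite ?M"
      by (rule finite_subset[of _ "card ` UNIV"]) auto
    show "y \<le> Suc n" if "y \<in> ?M" for y
      using that chain_card_le_cover_chain_length[OF semimodular assms(2)] by blast
    show "Suc n \<in> ?M"
      using cover_chain_imp_chain[OF assms(2)] by (metis (mono_tags, lifting) mem_Collect_eq)
  qed
  then show ?thesis unfolding lrank_def by simp
qed

section \<open>Inversions, the weak order and standardization\<close>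

lemma inversion_set_iff:
  assumes "p permutes {1..Suc r}"
  shows "(p i, p j) \<in> inversion_set r p \<longleftrightarrow> 1 \<le> i \<and> i < j \<and> j \<le> Suc r \<and> p j < p i"
proof
  assume "(p i, p j) \<in> inversion_set r p"
  then obtain i' j' where "p i = p i'" "p j = p j'" "1 \<le> i'" "i' < j'" "j' \<le> Suc r" "p j' < p i'"
    unfolding inversion_set_def by blast
  moreover have "i = i'" "j = j'" using calculation(1,2) permutes_inj[OF assms] by (auto dest: injD)
  ultimately show "1 \<le> i \<and> i < j \<and> j \<le> Suc r \<and> p j < p i" by simp
qed (auto simp: inversion_set_def)

lemma finite_inversion_set: "finite (inversion_set r p)"
  by (rule finite_subset[of _ "p ` {1..Suc r} \<times> p ` {1..Suc r}"]) (auto simp: inversion_set_def)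

lemma permutes_strict_mono_eq_id:
  assumes p: "p permutes {1..n}" and mono: "\<And>i. 1 \<le> i \<Longrightarrow> i < n \<Longrightarrow> p i < p (Suc i)"
  shows "p = id"
proof -
  have ge: "i \<le> p i" if "i \<in> {1..n}" for i
    using that
  proof (induction i)
    case (Suc i)
    then show ?case
      using mono[of i] permutes_in_image[OF p, of "Suc i"] by (cases "i = 0") auto
  qed simp
  have "sum id {1..n} = sum p {1..n}"
    using sum.permute[OF p, of id] by simp
  then have "p i = i" if "i \<in> {1..n}" for i
    using sum_mono_inv[of id "{1..n}" p i] ge that by simp
  then show ?thesis
    using permutes_not_in[OF p] by (metis eq_id_iff)
qed

text \<open>An ascent of \<open>\<pi>\<close> that is not reversed in \<open>\<sigma>\<close> keeps its two letters in the same
  order in \<open>\<sigma>\<close>; descents of \<open>\<pi>\<close> do so because \<open>\<pi> \<le>\<^sub>w \<sigma>\<close>.\<close>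
lemma weak_le_position_less:
  assumes \<pi>: "\<pi> permutes {1..Suc r}" and \<sigma>: "\<sigma> permutes {1..Suc r}"
    and le: "weak_le r \<pi> \<sigma>" and i: "i \<in> {1..r}"
    and not_reversed: "\<not> (\<pi> i < \<pi> (Suc i) \<and> (\<pi> (Suc i), \<pi> i) \<in> inversion_set r \<sigma>)"
  shows "inv \<sigma> (\<pi> i) < inv \<sigma> (\<pi> (Suc i))"
proof -
  define a b where "a = inv \<sigma> (\<pi> i)" and "b = inv \<sigma> (\<pi> (Suc i))"
  have \<sigma>ab: "\<sigma> a = \<pi> i" "\<sigma> b = \<pi> (Suc i)"
    unfolding a_def b_def using permutes_inverses(1)[OF \<sigma>] by auto
  have range: "a \<in> {1..Suc r}" "b \<in> {1..Suc r}"
    unfolding a_def b_def using i permutes_in_image[OF permutes_inv[OF \<sigma>]] permutes_in_image[OF \<pi>] by auto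
  have "\<pi> i \<noteq> \<pi> (Suc i)" using permutes_inj[OF \<pi>] by (metis injD n_not_Suc_n)
  then have "a \<noteq> b" using \<sigma>ab by auto
  moreover have "\<not> b < a"
  proof
    assume "b < a"
    show False
    proof (cases "\<pi> i < \<pi> (Suc i)")
      case True
      then have "(\<pi> (Suc i), \<pi> i) \<in> inversion_set r \<sigma>"
        using inversion_set_iff[OF \<sigma>, of b a] \<open>b < a\<close> range \<sigma>ab by simp
      then show False using not_reversed True by blast
    next
      case False
      then have "(\<pi> i, \<pi> (Suc i)) \<in> inversion_set r \<pi>"
        using inversion_set_iff[OF \<pi>, of i "Suc i"] i \<open>\<pi> i \<noteq> \<pi> (Suc i)\<close> by auto
      then have "(\<sigma> a, \<sigma> b) \<in> inversion_set r \<sigma>" using le \<sigma>ab by (auto simp: weak_le_def)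
      then show False using inversion_set_iff[OF \<sigma>, of a b] \<open>b < a\<close> by simp
    qed
  qed
  ultimately show ?thesis unfolding a_def b_def by simp
qed

lemma weak_le_ascent_step:
  assumes \<pi>: "\<pi> permutes {1..Suc r}" and \<sigma>: "\<sigma> permutes {1..Suc r}"
    and le: "weak_le r \<pi> \<sigma>" and ne: "\<pi> \<noteq> \<sigma>"
  shows "\<exists>i\<in>{1..r}. \<pi> i < \<pi> (Suc i) \<and> (\<pi> (Suc i), \<pi> i) \<in> inversion_set r \<sigma>"
proof (rule ccontr)
  assume "\<not> ?thesis"
  then have "inv \<sigma> (\<pi> i) < inv \<sigma> (\<pi> (Suc i))" if "1 \<le> i" "i < Suc r" for i
    using weak_le_position_less[OF \<pi> \<sigma> le] that by auto
  moreover have "inv \<sigma> \<circ> \<pi> permutes {1..Suc r}"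
    using permutes_compose[OF \<pi> permutes_inv[OF \<sigma>]] .
  ultimately have "inv \<sigma> \<circ> \<pi> = id"
    using permutes_strict_mono_eq_id by (metis comp_apply)
  then have "\<pi> = \<sigma>"
    using permutes_inverses(1)[OF \<sigma>] by (metis comp_apply eq_id_iff ext)
  with ne show False ..
qed

lemma transpose_Suc_less:
  fixes a b i :: nat
  assumes "a < b" "\<not> (a = i \<and> b = Suc i)"
  shows "Transposition.transpose i (Suc i) a < Transposition.transpose i (Suc i) b"
  using assms by (cases "a = i"; cases "a = Suc i"; cases "b = i"; cases "b = Suc i") simp_all

lemma inversion_set_comp_transpose_subset:
  assumes \<pi>: "\<pi> permutes {1..Suc r}" and i: "i \<in> {1..r}"
  shows "inversion_set r (\<pi> \<circ> Transposition.transpose i (Suc i))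
           \<subseteq> insert (\<pi> (Suc i), \<pi> i) (inversion_set r \<pi>)"
proof
  let ?s = "Transposition.transpose i (Suc i)"
  have "?s permutes {1..Suc r}" using i by (intro permutes_swap_id) auto
  then have s_range: "?s a \<in> {1..Suc r} \<longleftrightarrow> a \<in> {1..Suc r}" for a
    by (rule permutes_in_image)
  fix q assume "q \<in> inversion_set r (\<pi> \<circ> ?s)"
  then obtain a b where ab: "1 \<le> a" "a < b" "b \<le> Suc r" "\<pi> (?s b) < \<pi> (?s a)" "q = (\<pi> (?s a), \<pi> (?s b))"
    unfolding inversion_set_def by auto
  show "q \<in> insert (\<pi> (Suc i), \<pi> i) (inversion_set r \<pi>)"
  proof (cases "a = i \<and> b = Suc i")
    case False
    then have "(\<pi> (?s a), \<pi> (?s b)) \<in> inversion_set r \<pi>"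
      using inversion_set_iff[OF \<pi>, of "?s a" "?s b"] transpose_Suc_less[OF ab(2)]
        s_range[of a] s_range[of b] ab
      by simp
    then show ?thesis using ab(5) by simp
  qed (use ab in simp)
qed

text \<open>The inclusion above, applied to \<open>\<pi> \<circ> s\<close> with \<open>(\<pi> \<circ> s) \<circ> s = \<pi>\<close>, gives the reverse one.\<close>
lemma inversion_set_comp_transpose:
  assumes \<pi>: "\<pi> permutes {1..Suc r}" and i: "i \<in> {1..r}" and ascent: "\<pi> i < \<pi> (Suc i)"
  shows "inversion_set r (\<pi> \<circ> Transposition.transpose i (Suc i))
           = insert (\<pi> (Suc i), \<pi> i) (inversion_set r \<pi>)"
proof -
  let ?s = "Transposition.transpose i (Suc i)"
  have \<pi>s: "\<pi> \<circ> ?s permutes {1..Suc r}"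
    using permutes_compose[OF permutes_swap_id \<pi>] i by simp
  have "inversion_set r \<pi> \<subseteq> insert (\<pi> i, \<pi> (Suc i)) (inversion_set r (\<pi> \<circ> ?s))"
    using inversion_set_comp_transpose_subset[OF \<pi>s i] by (simp add: comp_assoc)
  moreover have "(\<pi> i, \<pi> (Suc i)) \<notin> inversion_set r \<pi>"
    using inversion_set_iff[OF \<pi>, of i "Suc i"] ascent by simp
  moreover have "(\<pi> (Suc i), \<pi> i) \<in> inversion_set r (\<pi> \<circ> ?s)"
    using inversion_set_iff[OF \<pi>s, of i "Suc i"] i ascent by simp
  ultimately show ?thesis
    using inversion_set_comp_transpose_subset[OF \<pi> i] by blast
qed

definition standardize :: "nat \<Rightarrow> (nat \<Rightarrow> nat) \<Rightarrow> nat \<Rightarrow> nat" where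
  "standardize r w j = (if j \<in> {1..Suc r} then card {i \<in> {1..Suc r}. w i \<le> w j} else j)"

lemma standardize_less_iff:
  assumes "i \<in> {1..Suc r}" "j \<in> {1..Suc r}"
  shows "standardize r w i < standardize r w j \<longleftrightarrow> w i < w j"
proof
  assume lt: "w i < w j"
  then have "{k \<in> {1..Suc r}. w k \<le> w i} \<subseteq> {k \<in> {1..Suc r}. w k \<le> w j}" by auto
  moreover have "j \<in> {k \<in> {1..Suc r}. w k \<le> w j} - {k \<in> {1..Suc r}. w k \<le> w i}"
    using assms(2) lt by simp
  ultimately have "{k \<in> {1..Suc r}. w k \<le> w i} \<subset> {k \<in> {1..Suc r}. w k \<le> w j}"
    by blast
  then show "standardize r w i < standardize r w j"
    using assms by (simp add: standardize_def psubset_card_mono)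
next
  assume "standardize r w i < standardize r w j"
  moreover have "\<not> w i < w j \<Longrightarrow> standardize r w j \<le> standardize r w i"
    using assms by (auto simp: standardize_def intro!: card_mono)
  ultimately show "w i < w j" by linarith
qed

lemma standardize_permutes:
  assumes inj: "inj_on w {1..Suc r}"
  shows "standardize r w permutes {1..Suc r}"
proof -
  have "inj_on (standardize r w) {1..Suc r}"
  proof (rule linorder_inj_onI')
    fix i j assume "i \<in> {1..Suc r}" "j \<in> {1..Suc r}" "i < j"
    moreover from this have "w i \<noteq> w j" using inj by (auto dest: inj_onD)
    ultimately show "standardize r w i \<noteq> standardize r w j"
      using standardize_less_iff[of i r j w] standardize_less_iff[of j r i w] by linarith
  qed
  moreover have "standardize r w ` {1..Suc r} \<subseteq> {1..Suc r}"
  proof (clarify)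
    fix j assume j: "j \<in> {1..Suc r}"
    then have "j \<in> {i \<in> {1..Suc r}. w i \<le> w j}" by simp
    then have "0 < card {i \<in> {1..Suc r}. w i \<le> w j}" by (auto simp: card_gt_0_iff)
    moreover have "card {i \<in> {1..Suc r}. w i \<le> w j} \<le> card {1..Suc r}"
      by (rule card_mono) auto
    ultimately show "standardize r w j \<in> {1..Suc r}" using j by (simp add: standardize_def)
  qed
  ultimately have "bij_betw (standardize r w) {1..Suc r} {1..Suc r}"
    by (simp add: bij_betw_def endo_inj_surj)
  then show ?thesis by (rule bij_imp_permutes) (auto simp: standardize_def)
qed

lemma standardize_cong:
  "(\<And>i. i \<in> {1..Suc r} \<Longrightarrow> w i = w' i) \<Longrightarrow> standardize r w = standardize r w'"
  unfolding standardize_def by (intro ext) (auto intro!: arg_cong[where f = card])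

lemma standardize_comp:
  assumes \<tau>: "\<tau> permutes {1..Suc r}"
  shows "standardize r (w \<circ> \<tau>) = standardize r w \<circ> \<tau>"
proof
  fix j
  show "standardize r (w \<circ> \<tau>) j = (standardize r w \<circ> \<tau>) j"
  proof (cases "j \<in> {1..Suc r}")
    case True
    let ?A = "{i \<in> {1..Suc r}. w (\<tau> i) \<le> w (\<tau> j)}"
    have "\<tau> ` ?A = {i \<in> {1..Suc r}. w i \<le> w (\<tau> j)}"
    proof (intro equalityI subsetI)
      fix i assume "i \<in> {i \<in> {1..Suc r}. w i \<le> w (\<tau> j)}"
      moreover have "\<tau> (inv \<tau> i) = i" using permutes_inverses(1)[OF \<tau>] .
      ultimately have "inv \<tau> i \<in> ?A" using permutes_in_image[OF \<tau>, of "inv \<tau> i"] by simp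
      then show "i \<in> \<tau> ` ?A" using \<open>\<tau> (inv \<tau> i) = i\<close> by (metis image_eqI)
    next
      fix i assume "i \<in> \<tau> ` ?A"
      then show "i \<in> {i \<in> {1..Suc r}. w i \<le> w (\<tau> j)}"
        using permutes_in_image[OF \<tau>] by blast
    qed
    then have "card ?A = card {i \<in> {1..Suc r}. w i \<le> w (\<tau> j)}"
      using card_image[OF permutes_inj_on[OF \<tau>], of ?A] by simp
    then show ?thesis
      using True permutes_in_image[OF \<tau>, of j] by (simp add: standardize_def)
  next
    case False
    then show ?thesis using permutes_not_in[OF \<tau> False] by (auto simp: standardize_def)
  qed
qed

lemma descent_set_standardize: "descent_set r (standardize r w) = descent_set r w"
  unfolding descent_set_def using standardize_less_iff[of "Suc _" r _ w] by auto

text \<open>Atoms are compared through the injection \<open>to_nat\<close> of the finite (hence countable) lattice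
  into \<open>\<nat>\<close>; any fixed linear order of the atoms would do.\<close>
definition first_atom :: "'a::{countable,order,bot} \<Rightarrow> 'a \<Rightarrow> 'a" where
  "first_atom u v = arg_min to_nat (\<lambda>a. is_atom a \<and> a \<le> u \<and> \<not> a \<le> v)"

lemma first_atom:
  fixes a u v :: "'a::{countable,order,bot}"
  assumes "is_atom a" "a \<le> u" "\<not> a \<le> v"
  shows "is_atom (first_atom u v)" "first_atom u v \<le> u" "\<not> first_atom u v \<le> v"
    and "\<And>c. is_atom c \<Longrightarrow> c \<le> u \<Longrightarrow> \<not> c \<le> v \<Longrightarrow> to_nat (first_atom u v) \<le> to_nat c"
  using arg_min_nat_lemma[of "\<lambda>a. is_atom a \<and> a \<le> u \<and> \<not> a \<le> v" a to_nat] assms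
  unfolding first_atom_def by blast+

lemma first_atom_eqI:
  fixes b u v :: "'a::{countable,order,bot}"
  assumes "is_atom b" "b \<le> u" "\<not> b \<le> v"
    and "\<And>c. is_atom c \<Longrightarrow> c \<le> u \<Longrightarrow> \<not> c \<le> v \<Longrightarrow> to_nat b \<le> to_nat c"
  shows "first_atom u v = b"
  using first_atom[OF assms(1-3)] assms by (metis le_antisym to_nat_split)

locale geometric =
  fixes L :: "'a::{finite,complete_lattice} itself"
  assumes geometric: "geometric_lattice L"
begin

lemma semimodular: "covers (inf x y) x \<Longrightarrow> covers y (sup x y)" for x y :: 'a
  using geometric unfolding geometric_lattice_def by blast

lemma atomistic: "x = Sup {a. is_atom a \<and> a \<le> x}" for x :: 'a
  using geometric unfolding geometric_lattice_def by blast

lemma lrank_cover_chain: "cover_chain x y k \<Longrightarrow> lrank y = lrank x + k" for x y :: 'a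
proof -
  assume xy: "cover_chain x y k"
  obtain n where n: "cover_chain bot x n" using cover_chain_exists[of bot x] by auto
  show ?thesis
    using lrank_eq_cover_chain_length[OF semimodular n]
      lrank_eq_cover_chain_length[OF semimodular cover_chain_trans[OF n xy]] by simp
qed

lemma lrank_bot [simp]: "lrank (bot :: 'a) = 0"
  using lrank_eq_cover_chain_length[OF semimodular cover_chain_refl] .

lemma lrank_covers: "covers x y \<Longrightarrow> lrank y = Suc (lrank x)" for x y :: 'a
  using lrank_cover_chain[OF cover_chain_covers] by simp

lemma lrank_strict_mono: "x < y \<Longrightarrow> lrank x < lrank y" for x y :: 'a
proof -
  assume xy: "x < y"
  then obtain k where k: "cover_chain x y k" using cover_chain_exists[OF less_imp_le] by blast
  have "0 < k" using cover_chain_less_imp_pos[OF k xy] .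
  then show ?thesis using lrank_cover_chain[OF k] by simp
qed

lemma lrank_mono: "x \<le> y \<Longrightarrow> lrank x \<le> lrank y" for x y :: 'a
  using lrank_strict_mono[of x y] by (cases "x = y") (auto simp: le_neq_trans)

lemma eq_if_le_and_lrank_eq: "x \<le> y \<Longrightarrow> lrank x = lrank y \<Longrightarrow> x = y" for x y :: 'a
  using lrank_strict_mono[of x y] le_neq_trans by fastforce

lemma covers_sup_atom:
  fixes a z :: 'a
  assumes a: "is_atom a" and az: "\<not> a \<le> z"
  shows "covers z (sup z a)"
proof -
  have "inf a z \<noteq> a" using az by (metis inf.absorb_iff1)
  then have "inf a z < a" by (simp add: order.strict_iff_order)
  then have "inf a z = bot" using a unfolding is_atom_def covers_def using bot.not_eq_extremum by blast
  then have "covers (inf a z) a" using a by (simp add: is_atom_def)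
  then show ?thesis using semimodular by (simp add: sup_commute)
qed

lemma exists_atom_not_below:
  fixes y z :: 'a
  assumes "\<not> y \<le> z"
  shows "\<exists>a. is_atom a \<and> a \<le> y \<and> \<not> a \<le> z"
proof (rule ccontr)
  assume "\<not> ?thesis"
  then have "Sup {a. is_atom a \<and> a \<le> y} \<le> z" by (auto intro: Sup_least)
  then show False using assms atomistic[of y] by simp
qed

lemma first_atom_not_le:
  fixes u v :: 'a
  assumes "\<not> u \<le> v"
  shows "is_atom (first_atom u v)" "first_atom u v \<le> u" "\<not> first_atom u v \<le> v"
    and "\<And>c. is_atom c \<Longrightarrow> c \<le> u \<Longrightarrow> \<not> c \<le> v \<Longrightarrow> to_nat (first_atom u v) \<le> to_nat c"
  using exists_atom_not_below[OF assms] first_atom by metis+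

lemma sup_atom_exchange:
  fixes a c z :: 'a
  assumes a: "is_atom a" "\<not> a \<le> z" and c: "c \<le> sup z a" "\<not> c \<le> z"
  shows "sup z c = sup z a"
proof -
  have "z < sup z c" using c(2) by (simp add: less_le_not_le)
  moreover have "sup z c \<le> sup z a" using c(1) by simp
  ultimately show ?thesis using covers_sup_atom[OF a] unfolding covers_def
    using order.not_eq_order_implies_strict by blast
qed

end

section \<open>Flags and their labels\<close>

locale geometric_flags = geometric L for L :: "'a::{finite,complete_lattice} itself" +
  fixes r :: nat
  assumes lrank_top: "r + 1 \<le> lrank (top :: 'a)"
begin

definition flag :: "(nat \<Rightarrow> 'a) \<Rightarrow> bool" where
  "flag x \<longleftrightarrow> x \<in> extensional {..r} \<and> x 0 = bot \<and> (\<forall>i<r. covers (x i) (x (Suc i)))"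

definition flag_top :: "(nat \<Rightarrow> 'a) \<Rightarrow> nat \<Rightarrow> 'a" where
  "flag_top x i = (if i \<le> r then x i else top)"

definition flag_label :: "(nat \<Rightarrow> 'a) \<Rightarrow> nat \<Rightarrow> 'a" where
  "flag_label x i = first_atom (flag_top x i) (x (i - 1))"

definition label_word :: "(nat \<Rightarrow> 'a) \<Rightarrow> nat \<Rightarrow> nat" where
  "label_word x i = to_nat (flag_label x i)"

abbreviation flag_pattern :: "(nat \<Rightarrow> 'a) \<Rightarrow> nat \<Rightarrow> nat" where
  "flag_pattern x \<equiv> standardize r (label_word x)"

lemma finite_flags: "finite {x. flag x}"
proof (rule finite_subset)
  show "{x. flag x} \<subseteq> PiE {..r} (\<lambda>_. UNIV)" by (auto simp: flag_def PiE_def)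
qed (rule finite_PiE; simp)

lemma flag_lrank: "flag x \<Longrightarrow> i \<le> r \<Longrightarrow> lrank (x i) = i"
proof (induction i)
  case (Suc i)
  then have "covers (x i) (x (Suc i))" by (simp add: flag_def)
  then show ?case using Suc lrank_covers by simp
qed (simp add: flag_def)

lemma flag_mono: "flag x \<Longrightarrow> i \<le> j \<Longrightarrow> j \<le> r \<Longrightarrow> x i \<le> x j"
  by (rule lift_Suc_mono_le_ivl[of "{..<r}"]) (auto simp: flag_def covers_def less_imp_le)

lemma flag_eqI:
  assumes "flag x" "flag y" "\<And>k. k \<le> r \<Longrightarrow> x k = y k"
  shows "x = y"
  using assms extensionalityI[of x "{..r}" y] by (auto simp: flag_def)

lemma flag_le_flag_top: "flag x \<Longrightarrow> i \<le> Suc r \<Longrightarrow> j \<le> i \<Longrightarrow> x j \<le> flag_top x i"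
  by (auto simp: flag_top_def intro: flag_mono)

lemma flag_less_flag_top: "flag x \<Longrightarrow> k \<le> r \<Longrightarrow> x k < flag_top x (Suc k)"
proof (cases "k = r")
  case True
  assume "flag x"
  then have "lrank (x k) < lrank (top :: 'a)" using flag_lrank True lrank_top by simp
  then have "x r \<noteq> top" using True by auto
  then show ?thesis using True by (simp add: flag_top_def top.not_eq_extremum)
qed (auto simp: flag_def flag_top_def covers_def)

lemma flag_label:
  assumes "flag x" "k \<le> r"
  shows "is_atom (flag_label x (Suc k))" "flag_label x (Suc k) \<le> flag_top x (Suc k)"
    "\<not> flag_label x (Suc k) \<le> x k"
    "\<And>c. is_atom c \<Longrightarrow> c \<le> flag_top x (Suc k) \<Longrightarrow> \<not> c \<le> x k \<Longrightarrow> label_word x (Suc k) \<le> to_nat c"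
  using first_atom_not_le[of "flag_top x (Suc k)" "x k"] flag_less_flag_top[OF assms]
  unfolding flag_label_def label_word_def by (auto simp: less_le_not_le)

lemma flag_label_eqI:
  assumes "is_atom b" "b \<le> flag_top x (Suc k)" "\<not> b \<le> x k"
    "\<And>c. is_atom c \<Longrightarrow> c \<le> flag_top x (Suc k) \<Longrightarrow> \<not> c \<le> x k \<Longrightarrow> to_nat b \<le> to_nat c"
  shows "flag_label x (Suc k) = b"
  unfolding flag_label_def using first_atom_eqI[OF assms] by simp

lemma flag_Suc_eq_sup_label:
  assumes x: "flag x" and k: "k < r"
  shows "x (Suc k) = sup (x k) (flag_label x (Suc k))"
proof -
  have cov: "covers (x k) (x (Suc k))" using x k by (simp add: flag_def)
  have "covers (x k) (sup (x k) (flag_label x (Suc k)))"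
    using covers_sup_atom flag_label[OF x] k by simp
  moreover have "sup (x k) (flag_label x (Suc k)) \<le> x (Suc k)"
    using flag_label(2)[OF x, of k] k cov by (simp add: flag_top_def covers_def less_imp_le)
  ultimately show ?thesis using cov unfolding covers_def
    by (metis order.not_eq_order_implies_strict)
qed

lemma flag_eq_if_labels_eq:
  assumes x: "flag x" and y: "flag y" and labels: "\<And>j. j \<in> {1..Suc r} \<Longrightarrow> flag_label x j = flag_label y j"
  shows "x = y"
proof (rule flag_eqI[OF x y])
  show "x k = y k" if "k \<le> r" for k
    using that
  proof (induction k)
    case 0
    then show ?case using x y by (simp add: flag_def)
  next
    case (Suc k)
    then show ?case using flag_Suc_eq_sup_label[OF x] flag_Suc_eq_sup_label[OF y] labels[of "Suc k"] by simp
  qed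
qed

lemma inj_on_flag_label:
  assumes x: "flag x"
  shows "inj_on (flag_label x) {1..Suc r}"
proof (rule linorder_inj_onI')
  fix i j assume i: "i \<in> {1..Suc r}" and j: "j \<in> {1..Suc r}" and "i < j"
  then obtain i' j' where ij: "i = Suc i'" "j = Suc j'" "i \<le> j'" "j' \<le> r"
    by (metis atLeastAtMost_iff less_eq_Suc_le not0_implies_Suc not_one_le_zero Suc_le_mono)
  have "flag_label x i \<le> x j'"
    using flag_label(2)[OF x, of i'] flag_le_flag_top[OF x, of j' i] ij
    by (simp add: flag_top_def)
  moreover have "\<not> flag_label x j \<le> x j'" using flag_label(3)[OF x ij(4)] ij by simp
  ultimately show "flag_label x i \<noteq> flag_label x j" by auto
qed

lemma inj_on_label_word: "flag x \<Longrightarrow> inj_on (label_word x) {1..Suc r}"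
  using inj_on_flag_label unfolding label_word_def by (simp add: inj_on_def)

lemma flag_pattern_permutes: "flag x \<Longrightarrow> flag_pattern x permutes {1..Suc r}"
  using standardize_permutes[OF inj_on_label_word] .

section \<open>Chains with given ranks and flags with given descents\<close>

definition chain_above :: "'a set \<Rightarrow> nat \<Rightarrow> 'a" where
  "chain_above C k = Inf {c \<in> C. k < lrank c}"

primrec greedy_chain :: "'a set \<Rightarrow> nat \<Rightarrow> 'a" where
  "greedy_chain C 0 = bot"
| "greedy_chain C (Suc k) = sup (greedy_chain C k) (first_atom (chain_above C k) (greedy_chain C k))"

definition greedy_flag :: "'a set \<Rightarrow> nat \<Rightarrow> 'a" where
  "greedy_flag C = restrict (greedy_chain C) {..r}"

lemma chain_above_le: "c \<in> C \<Longrightarrow> k < lrank c \<Longrightarrow> chain_above C k \<le> c"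
  unfolding chain_above_def by (simp add: Inf_lower)

lemma lrank_chain_above:
  assumes chain: "Complete_Partial_Order.chain (\<le>) C" and k: "k \<le> r"
  shows "k < lrank (chain_above C k)"
proof (cases "{c \<in> C. k < lrank c} = {}")
  case True
  then have "chain_above C k = top" by (simp only: chain_above_def Inf_empty)
  then show ?thesis using k lrank_top by simp
next
  case False
  have "Complete_Partial_Order.chain (\<le>) {c \<in> C. k < lrank c}"
    using chain by (rule chain_subset) blast
  then obtain c where "c \<in> C" "k < lrank c" "\<forall>z\<in>{c \<in> C. k < lrank c}. c \<le> z"
    using finite_chain_has_least[OF finite False] by blast
  then have "chain_above C k = c"
    unfolding chain_above_def by (metis (no_types, lifting) Inf_lower le_Inf_iff mem_Collect_eq order.antisym)
  then show ?thesis using \<open>k < lrank c\<close> by simp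
qed

context
  fixes C :: "'a set"
  assumes chain: "Complete_Partial_Order.chain (\<le>) C" and ranks: "lrank ` C \<subseteq> {1..r}"
begin

lemma chain_above_r: "chain_above C r = top"
proof -
  have "{c \<in> C. r < lrank c} = {}" using ranks by force
  then show ?thesis by (simp only: chain_above_def Inf_empty)
qed

lemma greedy_chain_lrank_le:
  "k \<le> r \<Longrightarrow> lrank (greedy_chain C k) = k \<and> (\<forall>c\<in>C. k \<le> lrank c \<longrightarrow> greedy_chain C k \<le> c)"
proof (induction k)
  case (Suc k)
  then have IH: "lrank (greedy_chain C k) = k" "\<forall>c\<in>C. k \<le> lrank c \<longrightarrow> greedy_chain C k \<le> c"
    by simp_all
  let ?a = "first_atom (chain_above C k) (greedy_chain C k)"
  have "\<not> chain_above C k \<le> greedy_chain C k"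
    using lrank_mono lrank_chain_above[OF chain] Suc.prems IH(1) by (metis Suc_leD leD)
  note a = first_atom_not_le[OF this]
  have "lrank (greedy_chain C (Suc k)) = Suc k"
    using lrank_covers[OF covers_sup_atom[OF a(1,3)]] IH(1) by simp
  moreover have "greedy_chain C (Suc k) \<le> c" if "c \<in> C" "Suc k \<le> lrank c" for c
    using IH(2) a(2) chain_above_le[of c C k] that by (simp add: le_supI2 order_trans[OF a(2)])
  ultimately show ?case by blast
qed simp

lemma not_chain_above_le_greedy_chain: "k \<le> r \<Longrightarrow> \<not> chain_above C k \<le> greedy_chain C k"
  using lrank_mono lrank_chain_above[OF chain] greedy_chain_lrank_le by (metis leD)

lemma greedy_chain_le_chain_above: "k \<le> r \<Longrightarrow> greedy_chain C k \<le> chain_above C k"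
  unfolding chain_above_def using greedy_chain_lrank_le by (auto intro!: Inf_greatest)

lemma flag_greedy_flag: "flag (greedy_flag C)"
  unfolding flag_def greedy_flag_def
proof (intro conjI allI impI)
  fix i assume "i < r"
  then show "covers (restrict (greedy_chain C) {..r} i) (restrict (greedy_chain C) {..r} (Suc i))"
    using covers_sup_atom first_atom_not_le[OF not_chain_above_le_greedy_chain] by simp
qed simp_all

lemma greedy_flag_lrank: "c \<in> C \<Longrightarrow> greedy_flag C (lrank c) = c"
  using greedy_chain_lrank_le[of "lrank c"] ranks eq_if_le_and_lrank_eq
  by (force simp: greedy_flag_def)

lemma flag_label_greedy_flag:
  assumes k: "k \<le> r"
  shows "flag_label (greedy_flag C) (Suc k) = first_atom (chain_above C k) (greedy_chain C k)"
proof -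
  let ?x = "greedy_flag C" and ?a = "first_atom (chain_above C k) (greedy_chain C k)"
  note a = first_atom_not_le[OF not_chain_above_le_greedy_chain[OF k]]
  have top_le: "flag_top ?x (Suc k) \<le> chain_above C k"
  proof (cases "k < r")
    case True
    then show ?thesis
      using greedy_chain_le_chain_above[OF k] a(2) by (simp add: flag_top_def greedy_flag_def)
  qed (use k chain_above_r in \<open>simp add: flag_top_def\<close>)
  show ?thesis
  proof (rule flag_label_eqI)
    show "?a \<le> flag_top ?x (Suc k)"
      by (simp add: flag_top_def greedy_flag_def)
  qed (use a k top_le in \<open>auto simp: greedy_flag_def intro: order_trans\<close>)
qed

lemma descent_set_greedy_flag: "descent_set r (label_word (greedy_flag C)) \<subseteq> lrank ` C"
proof
  fix j assume j: "j \<in> descent_set r (label_word (greedy_flag C))"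
  then obtain k where jk: "j = Suc k" "j \<le> r"
    by (auto simp: descent_set_def dest: Suc_le_D)
  show "j \<in> lrank ` C"
  proof (rule ccontr)
    assume "j \<notin> lrank ` C"
    then have "{c \<in> C. k < lrank c} = {c \<in> C. j < lrank c}" using jk by (auto simp: image_iff)
    then have same_above: "chain_above C j = chain_above C k" by (simp add: chain_above_def)
    define a b where "a = first_atom (chain_above C k) (greedy_chain C k)"
      and "b = first_atom (chain_above C j) (greedy_chain C j)"
    note a = first_atom_not_le[OF not_chain_above_le_greedy_chain, of k, folded a_def]
      and b = first_atom_not_le[OF not_chain_above_le_greedy_chain, of j, folded b_def]
    have "greedy_chain C j = sup (greedy_chain C k) a" using jk by (simp add: a_def)
    then have "\<not> b \<le> greedy_chain C k" "a \<noteq> b" using b(3) jk by (auto intro: le_supI1)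
    then have "to_nat a < to_nat b"
      using a(4)[of b] b(1,2) jk same_above by (simp add: order.not_eq_order_implies_strict)
    then show False
      using j jk flag_label_greedy_flag[of k] flag_label_greedy_flag[of j]
      by (simp add: descent_set_def label_word_def a_def b_def)
  qed
qed

end

lemma chain_flag_image:
  assumes x: "flag x" and U: "U \<subseteq> {..r}"
  shows "Complete_Partial_Order.chain (\<le>) (x ` U)"
proof (rule chainI)
  fix a b assume "a \<in> x ` U" "b \<in> x ` U"
  then obtain i j where "a = x i" "b = x j" "i \<le> r" "j \<le> r" using U by blast
  then show "a \<le> b \<or> b \<le> a" using flag_mono[OF x] nat_le_linear[of i j] by blast
qed

lemma lrank_flag_image: "flag x \<Longrightarrow> U \<subseteq> {..r} \<Longrightarrow> lrank ` x ` U = U"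
  using flag_lrank by (force simp: image_image subset_iff)

lemma flag_top_le_chain_above:
  assumes x: "flag x" and U: "U \<subseteq> {1..r}" and k: "k \<le> r"
  shows "flag_top x (Suc k) \<le> chain_above (x ` U) k"
  unfolding chain_above_def
proof (rule Inf_greatest)
  fix c assume "c \<in> {c \<in> x ` U. k < lrank c}"
  then obtain u where u: "c = x u" "u \<in> U" "k < lrank (x u)" by blast
  then have "Suc k \<le> u" "u \<le> r" using U flag_lrank[OF x] by auto
  then show "flag_top x (Suc k) \<le> c" using u(1) flag_mono[OF x] by (simp add: flag_top_def)
qed

text \<open>The key point: between two consecutive elements of the chain \<open>x ` U\<close> the labels of \<open>x\<close>
  increase, so the label of step \<open>k + 1\<close> is the first atom that becomes available below the
  next element of the chain.\<close>
lemma label_word_le_if_below_chain_above: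
  assumes x: "flag x" and U: "U \<subseteq> {1..r}" and des: "descent_set r (label_word x) \<subseteq> U"
    and k: "k \<le> r" and c: "is_atom c" "c \<le> chain_above (x ` U) k" "\<not> c \<le> x k"
  shows "label_word x (Suc k) \<le> to_nat c"
proof -
  define j where "j = (LEAST j. k < j \<and> c \<le> flag_top x j)"
  have "k < Suc r \<and> c \<le> flag_top x (Suc r)" using k by (simp add: flag_top_def)
  then have j: "k < j" "c \<le> flag_top x j" "j \<le> Suc r"
    using LeastI[of "\<lambda>j. k < j \<and> c \<le> flag_top x j"] Least_le[of "\<lambda>j. k < j \<and> c \<le> flag_top x j"]
    unfolding j_def by blast+
  have before_j: "\<not> c \<le> flag_top x i" if "k < i" "i < j" for i
    using not_less_Least[of i "\<lambda>j. k < j \<and> c \<le> flag_top x j"] that unfolding j_def by blast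
  obtain j' where j': "j = Suc j'" "k \<le> j'" "j' \<le> r" using j by (cases j) auto
  have "\<not> c \<le> x j'"
    using c(3) before_j[of j'] j' by (cases "j' = k") (auto simp: flag_top_def)
  then have "label_word x (Suc j') \<le> to_nat c"
    using flag_label(4)[OF x j'(3) c(1)] j j' by simp
  moreover have "label_word x i \<le> label_word x (Suc i)" if "i \<in> {Suc k..<Suc j'}" for i
  proof -
    have i: "k < i" "i < j" "i \<le> r" using that j' by auto
    have "i \<notin> U"
    proof
      assume "i \<in> U"
      then have "chain_above (x ` U) k \<le> x i"
        using chain_above_le flag_lrank[OF x] i by simp
      then show False using before_j[OF i(1,2)] c(2) i(3) by (simp add: flag_top_def)
    qed
    then have "i \<notin> descent_set r (label_word x)" using des by (rule contra_subsetD[rotated])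
    then show ?thesis using i by (simp add: descent_set_def)
  qed
  then have "label_word x (Suc k) \<le> label_word x (Suc j')"
    using lift_Suc_mono_le_ivl[of "{Suc k..<Suc j'}" "label_word x" "Suc k" "Suc j'"] j'(2) by simp
  ultimately show ?thesis by simp
qed

lemma flag_label_eq_first_atom_chain_above:
  assumes x: "flag x" and U: "U \<subseteq> {1..r}" and des: "descent_set r (label_word x) \<subseteq> U"
    and k: "k \<le> r"
  shows "flag_label x (Suc k) = first_atom (chain_above (x ` U) k) (x k)"
  using flag_label[OF x k] flag_top_le_chain_above[OF x U k]
    label_word_le_if_below_chain_above[OF x U des k]
  by (intro first_atom_eqI[symmetric]) (auto simp: label_word_def intro: order_trans)

lemma greedy_flag_flag_image:
  assumes x: "flag x" and U: "U \<subseteq> {1..r}" and des: "descent_set r (label_word x) \<subseteq> U"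
  shows "greedy_flag (x ` U) = x"
proof -
  have "Complete_Partial_Order.chain (\<le>) (x ` U)" "lrank ` x ` U \<subseteq> {1..r}"
    using chain_flag_image[OF x] lrank_flag_image[OF x] U by (simp_all add: subset_eq)
  note flag_greedy = flag_greedy_flag[OF this]
  show ?thesis
  proof (rule flag_eqI[OF flag_greedy x])
    show "greedy_flag (x ` U) k = x k" if "k \<le> r" for k
      using that
    proof (induction k)
      case 0
      then show ?case using x by (simp add: greedy_flag_def flag_def)
    next
      case (Suc k)
      then show ?case
        using flag_Suc_eq_sup_label[OF x] flag_label_eq_first_atom_chain_above[OF x U des]
        by (simp add: greedy_flag_def)
    qed
  qed
qed

lemma flag_f_eq_card_flags:
  assumes U: "U \<subseteq> {1..r}"
  shows "flag_f L U = card {x. flag x \<and> descent_set r (label_word x) \<subseteq> U}"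
proof -
  let ?chains = "{C :: 'a set. Complete_Partial_Order.chain (\<le>) C \<and> lrank ` C = U}"
  have "bij_betw (\<lambda>x. x ` U) {x. flag x \<and> descent_set r (label_word x) \<subseteq> U} ?chains"
  proof (rule bij_betw_byWitness[where f' = greedy_flag])
    show "\<forall>x\<in>{x. flag x \<and> descent_set r (label_word x) \<subseteq> U}. greedy_flag (x ` U) = x"
      using greedy_flag_flag_image U by blast
    have U': "U \<subseteq> {..r}" using U by auto
    show "\<forall>C\<in>?chains. greedy_flag C ` U = C"
    proof
      fix C assume C: "C \<in> ?chains"
      then have "greedy_flag C ` U = (\<lambda>c. greedy_flag C (lrank c)) ` C" by (auto simp: image_image)
      also have "\<dots> = C" using greedy_flag_lrank C U by simp
      finally show "greedy_flag C ` U = C" .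
    qed
    show "(\<lambda>x. x ` U) ` {x. flag x \<and> descent_set r (label_word x) \<subseteq> U} \<subseteq> ?chains"
      using chain_flag_image[OF _ U'] lrank_flag_image[OF _ U'] by blast
    show "greedy_flag ` ?chains \<subseteq> {x. flag x \<and> descent_set r (label_word x) \<subseteq> U}"
      using flag_greedy_flag descent_set_greedy_flag U by fastforce
  qed
  then show ?thesis unfolding flag_f_def by (simp add: bij_betw_same_card)
qed

lemma flag_h_eq_card_flags:
  assumes S: "S \<subseteq> {1..r}"
  shows "flag_h L S = int (card {x. flag x \<and> descent_set r (label_word x) = S})"
proof -
  define f where "f V = int (card {x. flag x \<and> descent_set r (label_word x) = V})" for V
  have finS: "finite S" using S finite_subset by blast
  have "sum f (Pow T) = int (flag_f L T)" if T: "T \<subseteq> S" for T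
  proof -
    have finT: "finite T" using T finS finite_subset by blast
    have "{x. flag x \<and> descent_set r (label_word x) \<subseteq> T}
        = (\<Union>V\<in>Pow T. {x. flag x \<and> descent_set r (label_word x) = V})" by auto
    then have "card {x. flag x \<and> descent_set r (label_word x) \<subseteq> T}
        = (\<Sum>V\<in>Pow T. card {x. flag x \<and> descent_set r (label_word x) = V})"
      using finT finite_flags by (auto intro!: card_UN_disjoint intro: finite_subset)
    then show ?thesis using flag_f_eq_card_flags[of T] T S by (simp add: f_def)
  qed
  then have "f S = (\<Sum>T\<in>Pow S. (-1) ^ (card S - card T) * int (flag_f L T))"
    using inclusion_exclusion_mobius[OF _ finS, of "\<lambda>V. sum f (Pow V)" f] by simp
  then show ?thesis unfolding flag_h_def f_def by simp
qed

section \<open>Exchanging two adjacent labels\<close>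

definition swap_flag :: "(nat \<Rightarrow> 'a) \<Rightarrow> nat \<Rightarrow> nat \<Rightarrow> 'a" where
  "swap_flag x k = x(Suc k := sup (x k) (flag_label x (Suc (Suc k))))"

context
  fixes x :: "nat \<Rightarrow> 'a" and k :: nat
  assumes x: "flag x" and k: "k < r"
begin

lemma flag_label_Suc_Suc_not_le: "\<not> flag_label x (Suc (Suc k)) \<le> x k"
proof
  assume "flag_label x (Suc (Suc k)) \<le> x k"
  also have "x k \<le> x (Suc k)" using flag_mono[OF x, of k "Suc k"] k by simp
  finally show False using flag_label(3)[OF x, of "Suc k"] k by simp
qed

lemma flag_label_Suc_not_le_swap: "\<not> flag_label x (Suc k) \<le> sup (x k) (flag_label x (Suc (Suc k)))"
proof
  let ?a = "flag_label x (Suc k)" and ?b = "flag_label x (Suc (Suc k))"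
  assume "?a \<le> sup (x k) ?b"
  then have "sup (x k) ?a = sup (x k) ?b"
    using sup_atom_exchange[of ?b "x k" ?a] flag_label[OF x] flag_label_Suc_Suc_not_le k by simp
  then show False
    using flag_label(3)[OF x, of "Suc k"] flag_Suc_eq_sup_label[OF x k] k by simp
qed

lemma not_le_Suc_if_le_swap:
  assumes c: "c \<le> sup (x k) (flag_label x (Suc (Suc k)))" "\<not> c \<le> x k"
  shows "\<not> c \<le> x (Suc k)"
proof
  let ?a = "flag_label x (Suc k)" and ?b = "flag_label x (Suc (Suc k))"
  assume "c \<le> x (Suc k)"
  then have "sup (x k) c = sup (x k) ?a"
    using sup_atom_exchange[of ?a "x k" c] flag_label[OF x] flag_Suc_eq_sup_label[OF x k] c(2) k by simp
  moreover have "sup (x k) c = sup (x k) ?b"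
    using sup_atom_exchange[OF _ flag_label_Suc_Suc_not_le c] flag_label[OF x] k by simp
  moreover have "\<not> ?b \<le> sup (x k) ?a"
    using flag_label(3)[OF x, of "Suc k"] flag_Suc_eq_sup_label[OF x k] k by simp
  ultimately show False by (metis sup.cobounded2)
qed

lemma flag_swap_flag: "flag (swap_flag x k)"
  unfolding flag_def
proof (intro conjI allI impI)
  let ?a = "flag_label x (Suc k)" and ?b = "flag_label x (Suc (Suc k))"
  show "swap_flag x k \<in> extensional {..r}" "swap_flag x k 0 = bot"
    using x k by (auto simp: swap_flag_def flag_def extensional_def)
  fix i assume i: "i < r"
  consider "i = k" | "i = Suc k" | "i \<noteq> k" "i \<noteq> Suc k" by blast
  then show "covers (swap_flag x k i) (swap_flag x k (Suc i))"
  proof cases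
    case 1
    then show ?thesis
      using covers_sup_atom flag_label(1)[OF x, of "Suc k"] flag_label_Suc_Suc_not_le k
      by (simp add: swap_flag_def)
  next
    case 2
    have "x (Suc (Suc k)) = sup (sup (x k) ?b) ?a"
      using flag_Suc_eq_sup_label[OF x, of "Suc k"] flag_Suc_eq_sup_label[OF x k] i 2
      by (simp add: ac_simps)
    then show ?thesis
      using covers_sup_atom flag_label(1)[OF x, of k] flag_label_Suc_not_le_swap 2 k
      by (simp add: swap_flag_def)
  next
    case 3
    then show ?thesis using x i by (simp add: swap_flag_def flag_def)
  qed
qed

lemma flag_label_swap_flag_Suc: "flag_label (swap_flag x k) (Suc k) = flag_label x (Suc (Suc k))"
proof (rule flag_label_eqI)
  let ?b = "flag_label x (Suc (Suc k))"
  note b = flag_label[OF x, of "Suc k"]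
  have top_eq: "flag_top (swap_flag x k) (Suc k) = sup (x k) ?b"
    using k by (simp add: flag_top_def swap_flag_def)
  show "is_atom ?b" using b k by simp
  show "?b \<le> flag_top (swap_flag x k) (Suc k)" using top_eq by simp
  show "\<not> ?b \<le> swap_flag x k k" using flag_label_Suc_Suc_not_le by (simp add: swap_flag_def)
  fix c assume c: "is_atom c" "c \<le> flag_top (swap_flag x k) (Suc k)" "\<not> c \<le> swap_flag x k k"
  then have c': "c \<le> sup (x k) ?b" "\<not> c \<le> x k" using top_eq by (simp_all add: swap_flag_def)
  have "x k \<le> flag_top x (Suc (Suc k))" using flag_le_flag_top[OF x] k by simp
  then have "c \<le> flag_top x (Suc (Suc k))" using c'(1) b(2) k by (simp add: le_supI order_trans)
  then show "to_nat ?b \<le> to_nat c"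
    using b(4)[of c] c(1) not_le_Suc_if_le_swap[OF c'] k by (simp add: label_word_def)
qed

lemma flag_label_swap_flag_Suc_Suc:
  assumes ascent: "label_word x (Suc k) < label_word x (Suc (Suc k))"
  shows "flag_label (swap_flag x k) (Suc (Suc k)) = flag_label x (Suc k)"
proof (rule flag_label_eqI)
  let ?a = "flag_label x (Suc k)" and ?b = "flag_label x (Suc (Suc k))"
  note a = flag_label[OF x, of k] and b = flag_label[OF x, of "Suc k"]
  have top_eq: "flag_top (swap_flag x k) (Suc (Suc k)) = flag_top x (Suc (Suc k))"
    by (simp add: flag_top_def swap_flag_def)
  show "is_atom ?a" using a k by simp
  have "x (Suc k) \<le> flag_top x (Suc (Suc k))" using flag_le_flag_top[OF x] k by simp
  then show "?a \<le> flag_top (swap_flag x k) (Suc (Suc k))"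
    using top_eq flag_Suc_eq_sup_label[OF x k] by simp
  show "\<not> ?a \<le> swap_flag x k (Suc k)" using flag_label_Suc_not_le_swap by (simp add: swap_flag_def)
  fix c assume c: "is_atom c" "c \<le> flag_top (swap_flag x k) (Suc (Suc k))"
    "\<not> c \<le> swap_flag x k (Suc k)"
  then have c': "c \<le> flag_top x (Suc (Suc k))" "\<not> c \<le> sup (x k) ?b"
    using top_eq by (simp_all add: swap_flag_def)
  show "to_nat ?a \<le> to_nat c"
  proof (cases "c \<le> x (Suc k)")
    case True
    moreover have "\<not> c \<le> x k" using c'(2) by (meson le_supI1)
    ultimately show ?thesis using a(4)[of c] c(1) k by (simp add: flag_top_def label_word_def)
  next
    case False
    then show ?thesis using b(4)[of c] c(1) c'(1) ascent k by (simp add: label_word_def)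
  qed
qed

lemma flag_label_swap_flag_other:
  "j \<noteq> Suc k \<Longrightarrow> j \<noteq> Suc (Suc k) \<Longrightarrow> flag_label (swap_flag x k) j = flag_label x j"
  by (cases j) (simp_all add: flag_label_def flag_top_def swap_flag_def)

lemma flag_label_swap_flag:
  assumes "label_word x (Suc k) < label_word x (Suc (Suc k))"
  shows "flag_label (swap_flag x k) = flag_label x \<circ> Transposition.transpose (Suc k) (Suc (Suc k))"
  using flag_label_swap_flag_Suc flag_label_swap_flag_Suc_Suc[OF assms] flag_label_swap_flag_other
  by (auto simp: fun_eq_iff transpose_def)

end

section \<open>Domination\<close>

definition labels_rearranged :: "(nat \<Rightarrow> 'a) \<Rightarrow> (nat \<Rightarrow> 'a) \<Rightarrow> (nat \<Rightarrow> nat) \<Rightarrow> bool" where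
  "labels_rearranged y x \<tau> \<longleftrightarrow>
     \<tau> permutes {1..Suc r} \<and> (\<forall>j\<in>{1..Suc r}. flag_label y j = flag_label x (\<tau> j))"

lemma labels_rearranged_id: "labels_rearranged x x id"
  by (simp add: labels_rearranged_def)

lemma labels_rearranged_trans:
  assumes z: "labels_rearranged z y \<tau>" and y: "labels_rearranged y x \<tau>'"
  shows "labels_rearranged z x (\<tau>' \<circ> \<tau>)"
  unfolding labels_rearranged_def
proof (intro conjI ballI)
  have \<tau>: "\<tau> permutes {1..Suc r}" using z by (simp add: labels_rearranged_def)
  then show "\<tau>' \<circ> \<tau> permutes {1..Suc r}"
    using permutes_compose[OF \<tau>] y by (simp add: labels_rearranged_def)
  fix j assume j: "j \<in> {1..Suc r}"
  then have "\<tau> j \<in> {1..Suc r}" using permutes_in_image[OF \<tau>] by blast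
  then show "flag_label z j = flag_label x ((\<tau>' \<circ> \<tau>) j)"
    using z y j unfolding labels_rearranged_def by simp
qed

lemma flag_pattern_rearranged:
  assumes "labels_rearranged y x \<tau>"
  shows "flag_pattern y = flag_pattern x \<circ> \<tau>"
proof -
  have "flag_pattern y = standardize r (label_word x \<circ> \<tau>)"
    using assms by (intro standardize_cong) (simp add: label_word_def labels_rearranged_def)
  then show ?thesis using standardize_comp assms by (simp add: labels_rearranged_def)
qed

lemma flag_pattern_mem_perms_with_descents:
  "flag x \<Longrightarrow> flag_pattern x \<in> perms_with_descents r (descent_set r (label_word x))"
  using flag_pattern_permutes descent_set_standardize by (simp add: perms_with_descents_def)

lemma swap_flag_rearranged:
  assumes x: "flag x" and k: "k < r" and ascent: "flag_pattern x (Suc k) < flag_pattern x (Suc (Suc k))"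
  shows "labels_rearranged (swap_flag x k) x (Transposition.transpose (Suc k) (Suc (Suc k)))"
proof -
  have "label_word x (Suc k) < label_word x (Suc (Suc k))"
    using ascent standardize_less_iff[of "Suc k" r "Suc (Suc k)" "label_word x"] k by simp
  then show ?thesis
    using flag_label_swap_flag[OF x k] k by (simp add: labels_rearranged_def permutes_swap_id)
qed

lemma weak_le_step_by_swap_flag:
  assumes x: "flag x" and \<sigma>: "\<sigma> permutes {1..Suc r}"
    and le: "weak_le r (flag_pattern x) \<sigma>" and ne: "flag_pattern x \<noteq> \<sigma>"
  obtains y \<tau> where "flag y" "labels_rearranged y x \<tau>" "weak_le r (flag_pattern y) \<sigma>"
    "card (inversion_set r \<sigma> - inversion_set r (flag_pattern y))
      < card (inversion_set r \<sigma> - inversion_set r (flag_pattern x))"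
proof -
  let ?p = "flag_pattern x"
  have p: "?p permutes {1..Suc r}" using flag_pattern_permutes[OF x] .
  obtain i where i: "i \<in> {1..r}" "?p i < ?p (Suc i)" "(?p (Suc i), ?p i) \<in> inversion_set r \<sigma>"
    using weak_le_ascent_step[OF p \<sigma> le ne] by blast
  then obtain k where k: "i = Suc k" "k < r" by (cases i) auto
  let ?y = "swap_flag x k"
  have y: "labels_rearranged ?y x (Transposition.transpose i (Suc i))"
    using swap_flag_rearranged[OF x k(2)] i(2) k(1) by simp
  have inv_y: "inversion_set r (flag_pattern ?y) = insert (?p (Suc i), ?p i) (inversion_set r ?p)"
    using inversion_set_comp_transpose[OF p i(1,2)] flag_pattern_rearranged[OF y] by simp
  have "(?p (Suc i), ?p i) \<notin> inversion_set r ?p"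
    using inversion_set_iff[OF p, of "Suc i" i] by simp
  then have "inversion_set r \<sigma> - inversion_set r (flag_pattern ?y)
      = (inversion_set r \<sigma> - inversion_set r ?p) - {(?p (Suc i), ?p i)}"
    using inv_y by blast
  then have "card (inversion_set r \<sigma> - inversion_set r (flag_pattern ?y))
      < card (inversion_set r \<sigma> - inversion_set r ?p)"
    using i(3) \<open>(?p (Suc i), ?p i) \<notin> inversion_set r ?p\<close>
    by (simp only:) (intro card_Diff1_less; simp add: finite_inversion_set)
  moreover have "weak_le r (flag_pattern ?y) \<sigma>"
    using inv_y le i(3) by (simp add: weak_le_def)
  ultimately show ?thesis using that flag_swap_flag[OF x k(2)] y by blast
qed

lemma exists_flag_with_pattern_above:
  assumes \<sigma>: "\<sigma> permutes {1..Suc r}"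
  shows "flag x \<Longrightarrow> weak_le r (flag_pattern x) \<sigma> \<Longrightarrow>
    \<exists>y \<tau>. flag y \<and> labels_rearranged y x \<tau> \<and> flag_pattern y = \<sigma>"
proof (induction "card (inversion_set r \<sigma> - inversion_set r (flag_pattern x))" arbitrary: x
    rule: less_induct)
  case less
  show ?case
  proof (cases "flag_pattern x = \<sigma>")
    case True
    then show ?thesis using less.prems labels_rearranged_id by blast
  next
    case False
    then obtain y \<tau> where y: "flag y" "labels_rearranged y x \<tau>" "weak_le r (flag_pattern y) \<sigma>"
      "card (inversion_set r \<sigma> - inversion_set r (flag_pattern y))
        < card (inversion_set r \<sigma> - inversion_set r (flag_pattern x))"
      using weak_le_step_by_swap_flag[OF less.prems(1) \<sigma> less.prems(2)] by blast
    then obtain z \<tau>' where "flag z" "labels_rearranged z y \<tau>'" "flag_pattern z = \<sigma>"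
      using less.hyps by blast
    then show ?thesis using labels_rearranged_trans y(2) by blast
  qed
qed

lemma flag_eq_if_same_rearrangement:
  assumes x: "flag x" and x': "flag x'"
    and y: "labels_rearranged y x \<tau>" and y': "labels_rearranged y x' \<tau>'"
    and same_pattern: "flag_pattern x = flag_pattern x'"
  shows "x = x'"
proof -
  have "flag_pattern x \<circ> \<tau> = flag_pattern x \<circ> \<tau>'"
    using flag_pattern_rearranged[OF y] flag_pattern_rearranged[OF y'] same_pattern by simp
  then have "\<tau> = \<tau>'"
    using permutes_inj[OF flag_pattern_permutes[OF x]] by (simp add: fun_eq_iff injD)
  have \<tau>: "\<tau> permutes {1..Suc r}" using y by (simp add: labels_rearranged_def)
  have "flag_label x j = flag_label x' j" if "j \<in> {1..Suc r}" for j
  proof -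
    have "inv \<tau> j \<in> {1..Suc r}" "\<tau> (inv \<tau> j) = j"
      using that permutes_in_image[OF permutes_inv[OF \<tau>]] permutes_inverses(1)[OF \<tau>] by auto
    then show ?thesis using y y' \<open>\<tau> = \<tau>'\<close> unfolding labels_rearranged_def by metis
  qed
  then show ?thesis using flag_eq_if_labels_eq[OF x x'] by blast
qed

lemma exists_flag_with_descent_set_above:
  assumes x: "flag x" and \<sigma>: "\<sigma> \<in> perms_with_descents r S" and le: "weak_le r (flag_pattern x) \<sigma>"
  shows "\<exists>y \<tau>. y \<in> {y. flag y \<and> descent_set r (label_word y) = S} \<and> labels_rearranged y x \<tau>
    \<and> flag_pattern y = \<sigma>"
proof -
  have "\<sigma> permutes {1..Suc r}" using \<sigma> by (simp add: perms_with_descents_def)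
  then obtain y \<tau> where "flag y" "labels_rearranged y x \<tau>" "flag_pattern y = \<sigma>"
    using exists_flag_with_pattern_above x le by blast
  moreover have "descent_set r (label_word y) = S"
    using calculation(3) \<sigma> descent_set_standardize[of r "label_word y"]
    by (simp add: perms_with_descents_def)
  ultimately show ?thesis by blast
qed

lemma card_flags_with_descent_set_mono:
  assumes "dominates r S T"
  shows "card {x. flag x \<and> descent_set r (label_word x) = T}
    \<le> card {x. flag x \<and> descent_set r (label_word x) = S}"
proof -
  let ?A = "\<lambda>U. {x. flag x \<and> descent_set r (label_word x) = U}"
  obtain \<phi> where \<phi>_inj: "inj_on \<phi> (perms_with_descents r T)"
    and \<phi>_into: "\<phi> ` perms_with_descents r T \<subseteq> perms_with_descents r S"
    and \<phi>_above: "\<forall>\<pi>\<in>perms_with_descents r T. weak_le r \<pi> (\<phi> \<pi>)"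
    using assms unfolding dominates_def by blast
  have pattern: "flag_pattern x \<in> perms_with_descents r T" if "x \<in> ?A T" for x
    using that flag_pattern_mem_perms_with_descents by auto
  let ?Q = "\<lambda>x y. \<exists>\<tau>. y \<in> ?A S \<and> labels_rearranged y x \<tau> \<and> flag_pattern y = \<phi> (flag_pattern x)"
  define \<Psi> where "\<Psi> x = (SOME y. ?Q x y)" for x
  have \<Psi>: "?Q x (\<Psi> x)" if x: "x \<in> ?A T" for x
  proof -
    have "flag x" using x by simp
    moreover have "\<phi> (flag_pattern x) \<in> perms_with_descents r S"
      using \<phi>_into pattern[OF x] by blast
    moreover have "weak_le r (flag_pattern x) (\<phi> (flag_pattern x))"
      using \<phi>_above pattern[OF x] by blast
    ultimately have "\<exists>y. ?Q x y" by (rule exists_flag_with_descent_set_above)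
    then show ?thesis unfolding \<Psi>_def by (rule someI_ex)
  qed
  have "\<Psi> ` ?A T \<subseteq> ?A S"
    using \<Psi> by blast
  moreover have "inj_on \<Psi> (?A T)"
  proof (rule inj_onI)
    fix x x' assume x: "x \<in> ?A T" and x': "x' \<in> ?A T" and eq: "\<Psi> x = \<Psi> x'"
    obtain \<tau> \<tau>' where \<tau>: "labels_rearranged (\<Psi> x) x \<tau>" and \<tau>': "labels_rearranged (\<Psi> x) x' \<tau>'"
      using \<Psi>[OF x] \<Psi>[OF x'] eq by auto
    have "\<phi> (flag_pattern x) = \<phi> (flag_pattern x')"
      using \<Psi>[OF x] \<Psi>[OF x'] eq by auto
    then have "flag_pattern x = flag_pattern x'"
      using inj_onD[OF \<phi>_inj _ pattern[OF x] pattern[OF x']] by blast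
    then show "x = x'"
      using flag_eq_if_same_rearrangement[OF _ _ \<tau> \<tau>'] x x' by simp
  qed
  moreover have "finite (?A S)" using finite_flags by (auto intro: finite_subset)
  ultimately show ?thesis by (simp add: card_inj_on_le)
qed

end

theorem proposition5p2:
  fixes r :: nat and S T :: "nat set" and L :: "'a::{finite,complete_lattice} itself"
  assumes "S \<subseteq> {1..r}" and "T \<subseteq> {1..r}"
    and "dominates r S T"
    and "geometric_lattice L"
    and "lrank (top :: 'a) \<ge> r + 1"
  shows "flag_h L T \<le> flag_h L S"
proof -
  interpret geometric_flags L r
    using assms(4,5) by unfold_locales auto
  show ?thesis
    using flag_h_eq_card_flags[OF assms(1)] flag_h_eq_card_flags[OF assms(2)]
      card_flags_with_descent_set_mono[OF assms(3)] by simp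
qed

end
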